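(* Let $\{\mathbf Z_i(n), i\in\mathbb N\}$ be a critical GWBP/$\infty$ with mean matrix $\mathbf M\in\mathcal M_1^0$ and $\mathbf F(\mathbf s)\neq\mathbf M\mathbf s$. For each $i$ define $\epsilon_{1,i}(\mathbf Q(n;\mathbf s))$ by $$\sum_{j\in\mathbb N}Q_j(n;\mathbf s)\,N_{ij}\big(\mathbf F(n;\mathbf s)\big)=M_i\,\epsilon_{1,i}(\mathbf Q(n;\mathbf s)).$$ Then $$\lim_{n\to\infty}\sup_{\mathbf s\in\mathbf S,\ i\in\mathbb N}\frac{|\epsilon_{1,i}(\mathbf Q(n;\mathbf s))|}{\mathcal Q(n;\mathbf s)}=0.$$
   Context: A GWBP/$\infty$ has types $\mathbb N=\{1,2,\dots\}$. Each particle lives one unit of time; a type-$i$ particle produces, independently of everything else, a random vector $\mathbf Z_i=(Z_{ij})_{j\in\mathbb N}$ of children, with $Z_i:=\sum_jZ_{ij}<\infty$ a.s. $\mathbf Z_i(n)=(Z_{ij}(n))_j$ is the generation-$n$ population from one type-$i$ particle. For $\mathbf s\in[0,1]^{\mathbb N}$: $F_i(n;\mathbf s)=\mathbb E\prod_js_j^{Z_{ij}(n)}$, $F_i(\mathbf s)=F_i(1;\mathbf s)$, $\mathbf F(n;\mathbf s)=(F_i(n;\mathbf s))_i$, $Q_i(n;\mathbf s)=1-F_i(n;\mathbf s)$, $\mathbf Q(n;\mathbf s)=(Q_i(n;\mathbf s))_i$, $\mathcal Q(n;\mathbf s)=\sup_iQ_i(n;\mathbf s)$, $N_{ij}(\mathbf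 s)=\mathbb E\big[\sum_{k=0}^{Z_{ij}-1}s_j^k\big(1-\prod_{l=j+1}^\infty s_l^{Z_{il}}\big)\big]$. $\mathbf S=\{\mathbf s\in[0,1]^{\mathbb N}:\mathbf s\neq\mathbf 1\}$. "$\mathbf F(\mathbf s)\neq\mathbf M\mathbf s$" means it is not true that $F_i(\mathbf s)=\sum_jM_{ij}s_j$ for all $i,\mathbf s$. Mean matrix $\mathbf M=(M_{ij})$, $M_{ij}=\mathbb EZ_{ij}$, $M^{(n)}_{ij}=\mathbb EZ_{ij}(n)$, $M_i=\sum_jM_{ij}=\mathbb EZ_i$. Irreducible: for all $i,j$ some $M^{(n)}_{ij}>0$; aperiodic: gcd of such $n$ is 1; then $\lim_n(M^{(n)}_{ij})^{1/n}=1/R$ for a common $R$; critical: $R=1$. $\mathbf M\in\mathcal M_1$ means: (i) irreducible, aperiodic, $R=1$, 1-recurrent ($\sum_nM^{(n)}_{ij}=\infty$) and 1-positive ($\lim_nM^{(n)}_{ij}>0$ for all $i,j$); then there are positive eigenvectors $\mathbf v\mathbf M=\mathbf v$, $\mathbf M\mathbf u^T=\mathbf u^T$, unique up to positive multiples, normalized with $\sum_jv_ju_j=1$; (ii) $\sum_jv_j=1$ and $U:=\sup_iu_i<\infty$; (iii) $\lim_{N\to\infty}\sup_iM_i^{-1}\sum_{j>N}M_{ij}=0$ and $\lim_{K\to\infty}\sup_iM_i^{-1}\mathbb E[Z_i;Z_i>K]=0$. $\mathbf M\in\mathcal M_1^0$: $\mathbf M\in\mathcal M_1$ and (iv) there exist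 $m\in\mathbb N$, $c,C>0$ with $M_{ij}<Cu_iv_j$ and $M^{(m)}_{1j}>cv_j$ for all $i,j$. *)

theory Defs
  imports "HOL-Probability.Probability"
begin

text \<open>Types are labelled by nat (type 0 plays the role of the paper's type 1).
  An offspring law for type i is a pmf on offspring vectors z :: nat \<Rightarrow> nat.\<close>

definition supp :: "(nat \<Rightarrow> nat) \<Rightarrow> nat set" where
  "supp z = {j. z j \<noteq> 0}"

definition Ztot :: "(nat \<Rightarrow> nat) \<Rightarrow> nat" where
  "Ztot z = (\<Sum>j\<in>supp z. z j)"

definition valid_offspring :: "(nat \<Rightarrow> (nat \<Rightarrow> nat) pmf) \<Rightarrow> bool" where
  "valid_offspring P \<longleftrightarrow> (\<forall>i. \<forall>z\<in>set_pmf (P i). finite (supp z))"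

definition genf :: "(nat \<Rightarrow> (nat \<Rightarrow> nat) pmf) \<Rightarrow> nat \<Rightarrow> (nat \<Rightarrow> real) \<Rightarrow> real" where
  "genf P i s = measure_pmf.expectation (P i) (\<lambda>z. \<Prod>j\<in>supp z. s j ^ z j)"

fun genfn :: "(nat \<Rightarrow> (nat \<Rightarrow> nat) pmf) \<Rightarrow> nat \<Rightarrow> (nat \<Rightarrow> real) \<Rightarrow> nat \<Rightarrow> real" where
  "genfn P 0 s = s"
| "genfn P (Suc n) s = (\<lambda>i. genf P i (genfn P n s))"

definition Qn :: "(nat \<Rightarrow> (nat \<Rightarrow> nat) pmf) \<Rightarrow> nat \<Rightarrow> (nat \<Rightarrow> real) \<Rightarrow> nat \<Rightarrow> real" where
  "Qn P n s i = 1 - genfn P n s i"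

definition Qsup :: "(nat \<Rightarrow> (nat \<Rightarrow> nat) pmf) \<Rightarrow> nat \<Rightarrow> (nat \<Rightarrow> real) \<Rightarrow> real" where
  "Qsup P n s = (SUP i. Qn P n s i)"

definition Mmat :: "(nat \<Rightarrow> (nat \<Rightarrow> nat) pmf) \<Rightarrow> nat \<Rightarrow> nat \<Rightarrow> ennreal" where
  "Mmat P i j = (\<integral>\<^sup>+ z. ennreal (real (z j)) \<partial>measure_pmf (P i))"

definition Mtot :: "(nat \<Rightarrow> (nat \<Rightarrow> nat) pmf) \<Rightarrow> nat \<Rightarrow> ennreal" where
  "Mtot P i = (\<integral>\<^sup>+ z. ennreal (real (Ztot z)) \<partial>measure_pmf (P i))"

fun Mpow :: "(nat \<Rightarrow> (nat \<Rightarrow> nat) pmf) \<Rightarrow> nat \<Rightarrow> nat \<Rightarrow> nat \<Rightarrow> ennreal" where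
  "Mpow P 0 i j = (if i = j then 1 else 0)"
| "Mpow P (Suc n) i j = (\<Sum>k. Mpow P n i k * Mmat P k j)"

definition Nfun :: "(nat \<Rightarrow> (nat \<Rightarrow> nat) pmf) \<Rightarrow> nat \<Rightarrow> nat \<Rightarrow> (nat \<Rightarrow> real) \<Rightarrow> real" where
  "Nfun P i j s = measure_pmf.expectation (P i)
     (\<lambda>z. (\<Sum>k<z j. s j ^ k) * (1 - (\<Prod>l\<in>{l\<in>supp z. j < l}. s l ^ z l)))"

definition eps1 :: "(nat \<Rightarrow> (nat \<Rightarrow> nat) pmf) \<Rightarrow> nat \<Rightarrow> (nat \<Rightarrow> real) \<Rightarrow> nat \<Rightarrow> real" where
  "eps1 P n s i = (\<Sum>j. Qn P n s j * Nfun P i j (genfn P n s)) / enn2real (Mtot P i)"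

definition in_M10 :: "(nat \<Rightarrow> (nat \<Rightarrow> nat) pmf) \<Rightarrow> bool" where
  "in_M10 P \<longleftrightarrow>
     \<comment> \<open>(i) irreducible, aperiodic, R = 1, 1-recurrent, 1-positive\<close>
     (\<forall>i j. \<exists>n\<ge>1. 0 < Mpow P n i j) \<and>
     (\<forall>i. Gcd {n. 1 \<le> n \<and> 0 < Mpow P n i i} = 1) \<and>
     (\<forall>i j. (\<lambda>n. root n (enn2real (Mpow P n i j))) \<longlonglongrightarrow> 1) \<and>
     (\<forall>i j. (\<Sum>n. Mpow P n i j) = \<infinity>) \<and>
     (\<forall>i j. \<exists>L. 0 < L \<and> (\<lambda>n. Mpow P n i j) \<longlonglongrightarrow> L) \<and>
     (\<exists>u v :: nat \<Rightarrow> real.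
        (\<forall>j. 0 < v j) \<and> (\<forall>i. 0 < u i) \<and>
        (\<forall>j. (\<Sum>i. ennreal (v i) * Mmat P i j) = ennreal (v j)) \<and>
        (\<forall>i. (\<Sum>j. Mmat P i j * ennreal (u j)) = ennreal (u i)) \<and>
        (\<Sum>j. ennreal (v j * u j)) = 1 \<and>
        \<comment> \<open>(ii)\<close>
        (\<Sum>j. ennreal (v j)) = 1 \<and> bdd_above (range u) \<and>
        \<comment> \<open>(iii)\<close>
        (\<lambda>N. \<Squnion>i. (\<Sum>j. if N < j then Mmat P i j else 0) / Mtot P i) \<longlonglongrightarrow> 0 \<and>
        (\<lambda>K. \<Squnion>i. (\<integral>\<^sup>+ z. ennreal (if K < Ztot z then real (Ztot z) else 0) \<partial>measure_pmf (P i))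
                    / Mtot P i) \<longlonglongrightarrow> 0 \<and>
        \<comment> \<open>(iv)\<close>
        (\<exists>m::nat. \<exists>c C::real. 0 < c \<and> 0 < C \<and>
           (\<forall>i j. Mmat P i j < ennreal (C * u i * v j)) \<and>
           (\<forall>j. ennreal (c * v j) < Mpow P m 0 j)))"

definition F_not_linear :: "(nat \<Rightarrow> (nat \<Rightarrow> nat) pmf) \<Rightarrow> bool" where
  "F_not_linear P \<longleftrightarrow> \<not> (\<forall>i s. (\<forall>j. 0 \<le> s j \<and> s j \<le> 1) \<longrightarrow>
       genf P i s = enn2real (\<Sum>j. Mmat P i j * ennreal (s j)))"

definition Sset :: "(nat \<Rightarrow> real) set" where
  "Sset = {s. (\<forall>j. 0 \<le> s j \<and> s j \<le> 1) \<and> s \<noteq> (\<lambda>_. 1)}"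

end

theory Submission
  imports Defs
begin

(* The Bernoulli-type bound 1 - \<Prod>j t_j^{z_j} \<le> \<Sum>j z_j (1 - t_j), integrated against the offspring
   law, gives 1 - F_i(t) \<le> \<Sum>j M_ij (1 - t_j).  At the extinction probability q = F(q) the vector
   1 - q is therefore subinvariant for M, and pairing with the left eigenvector v makes it invariant.
   By irreducibility either q = 1 or q < 1 everywhere; in the latter case the Bernoulli bound is
   attained almost surely, which allows at most one child per particle, and v M = v then forces
   exactly one, i.e. F(s) = M s.  Hence q = 1, and M_ij \<le> C u_i v_j turns the bound into
   sup_{s,i} Q_i(n+1;s) \<le> C U \<Sum>j v_j (1 - F_j(n;0)) \<rightarrow> 0.  Finally the integrand of N_ij is at most
   z_j min(1, Z_i \<Q>), so for every K
   |\<epsilon>_{1,i}| / \<Q> \<le> E[Z_i min(1, Z_i \<Q>)] / M_i \<le> K \<Q> + E[Z_i; Z_i > K] / M_i,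
   and condition (iii) makes the last term uniformly small. *)

section \<open>Bernoulli-type inequalities for products of powers\<close>

lemma mult_ge_one_minus_add:
  fixes A B a b :: real
  assumes "0 \<le> A" "0 \<le> B" "1 - a \<le> A" "1 - b \<le> B" "0 \<le> a" "0 \<le> b"
  shows "1 - a - b \<le> A * B"
proof (cases "a \<le> 1 \<and> b \<le> 1")
  case True
  have "(1 - a) * (1 - b) \<le> A * B" using assms True by (intro mult_mono) auto
  moreover have "1 - a - b \<le> (1 - a) * (1 - b)" using assms by (simp add: algebra_simps)
  ultimately show ?thesis by linarith
next
  case False
  then show ?thesis using assms mult_nonneg_nonneg[of A B] by linarith
qed

lemma mult_gt_one_minus_add:
  fixes A B a b :: real
  assumes "0 \<le> A" "0 \<le> B" "1 - a \<le> A" "1 - b \<le> B" "0 < a" "0 < b"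
  shows "1 - a - b < A * B"
proof (cases "a \<le> 1 \<and> b \<le> 1")
  case True
  have "(1 - a) * (1 - b) \<le> A * B" using assms True by (intro mult_mono) auto
  moreover have "1 - a - b < (1 - a) * (1 - b)" using assms by (simp add: algebra_simps)
  ultimately show ?thesis by linarith
next
  case False
  then show ?thesis using assms mult_nonneg_nonneg[of A B] by linarith
qed

lemma prod_power_ge_one_minus_sum:
  fixes t :: "nat \<Rightarrow> real" and z :: "nat \<Rightarrow> nat"
  assumes "finite S" "\<And>j. 0 \<le> t j \<and> t j \<le> 1"
  shows "1 - (\<Sum>j\<in>S. real (z j) * (1 - t j)) \<le> (\<Prod>j\<in>S. t j ^ z j)"
  using assms(1)
proof (induction S rule: finite_induct)
  case (insert a S)
  have "1 - real (z a) * (1 - t a) \<le> t a ^ z a"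
    using Bernoulli_inequality[of "t a - 1" "z a"] assms(2)[of a] by (simp add: algebra_simps)
  then have "1 - real (z a) * (1 - t a) - (\<Sum>j\<in>S. real (z j) * (1 - t j))
      \<le> t a ^ z a * (\<Prod>j\<in>S. t j ^ z j)"
    using insert assms(2) by (intro mult_ge_one_minus_add prod_nonneg sum_nonneg) auto
  then show ?case using insert by (simp add: algebra_simps)
qed simp

lemma prod_power_gt_one_minus_sum:
  fixes t :: "nat \<Rightarrow> real" and z :: "nat \<Rightarrow> nat"
  assumes fin: "finite S" and t: "\<And>j. 0 \<le> t j \<and> t j < 1" and two: "2 \<le> (\<Sum>j\<in>S. z j)"
  shows "1 - (\<Sum>j\<in>S. real (z j) * (1 - t j)) < (\<Prod>j\<in>S. t j ^ z j)"
proof -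
  obtain a where a: "a \<in> S" "z a \<noteq> 0"
    using two by (metis not_numeral_le_zero sum.neutral)
  define y where "y = z(a := z a - 1)"
  have y_off_a: "y j = z j" if "j \<in> S - {a}" for j using that by (simp add: y_def)
  have "(\<Prod>j\<in>S. t j ^ z j) = t a ^ z a * (\<Prod>j\<in>S - {a}. t j ^ y j)"
    using prod.remove[OF fin a(1)] y_off_a by simp
  also have "\<dots> = t a * (\<Prod>j\<in>S. t j ^ y j)"
    using prod.remove[OF fin a(1), of "\<lambda>j. t j ^ y j"] a(2)
    by (simp add: y_def power_Suc[symmetric])
  finally have prod_eq: "(\<Prod>j\<in>S. t j ^ z j) = t a * (\<Prod>j\<in>S. t j ^ y j)" .
  have "(\<Sum>j\<in>S. real (z j) * (1 - t j)) = real (z a) * (1 - t a) + (\<Sum>j\<in>S - {a}. real (y j) * (1 - t j))"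
    using sum.remove[OF fin a(1)] y_off_a by simp
  also have "\<dots> = (1 - t a) + (\<Sum>j\<in>S. real (y j) * (1 - t j))"
    using sum.remove[OF fin a(1), of "\<lambda>j. real (y j) * (1 - t j)"] a(2)
    by (simp add: y_def of_nat_diff algebra_simps)
  finally have sum_eq: "(\<Sum>j\<in>S. real (z j) * (1 - t j)) = (1 - t a) + (\<Sum>j\<in>S. real (y j) * (1 - t j))" .
  have "(\<Sum>j\<in>S. z j) = Suc (\<Sum>j\<in>S. y j)"
    using sum.remove[OF fin a(1), of z] sum.remove[OF fin a(1), of y] y_off_a a(2)
    by (simp add: y_def)
  then have "(\<Sum>j\<in>S. y j) \<noteq> 0" using two by simp
  then obtain b where b: "b \<in> S" "y b \<noteq> 0" by (meson sum.neutral)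
  have "0 < (\<Sum>j\<in>S. real (y j) * (1 - t j))"
    using t b by (intro sum_pos2[OF fin b(1)]) (auto simp: less_imp_le)
  then have "1 - (1 - t a) - (\<Sum>j\<in>S. real (y j) * (1 - t j)) < t a * (\<Prod>j\<in>S. t j ^ y j)"
    using t fin by (intro mult_gt_one_minus_add prod_nonneg prod_power_ge_one_minus_sum)
      (auto simp: less_imp_le)
  then show ?thesis unfolding prod_eq sum_eq by simp
qed

section \<open>Generating functions on the unit cube\<close>

definition unit_cube :: "(nat \<Rightarrow> real) set" where
  "unit_cube = {t. \<forall>j. 0 \<le> t j \<and> t j \<le> 1}"

definition pgf_monomial :: "(nat \<Rightarrow> real) \<Rightarrow> (nat \<Rightarrow> nat) \<Rightarrow> real" where
  "pgf_monomial t z = (\<Prod>j\<in>supp z. t j ^ z j)"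

lemma unit_cube_zero: "(\<lambda>_. 0) \<in> unit_cube"
  by (simp add: unit_cube_def)

lemma genf_eq_expectation: "genf P i t = measure_pmf.expectation (P i) (pgf_monomial t)"
  unfolding genf_def pgf_monomial_def ..

lemma pgf_monomial_bounds:
  assumes "t \<in> unit_cube" shows "0 \<le> pgf_monomial t z" "pgf_monomial t z \<le> 1"
  using assms unfolding pgf_monomial_def unit_cube_def
  by (auto intro!: prod_nonneg prod_le_1 power_le_one)

lemma integrable_pgf_monomial:
  assumes "t \<in> unit_cube" shows "integrable (measure_pmf p) (pgf_monomial t)"
  using pgf_monomial_bounds[OF assms] by (intro measure_pmf.integrable_const_bound[where B=1]) auto

lemma genf_bounds:
  assumes "t \<in> unit_cube" shows "0 \<le> genf P i t" "genf P i t \<le> 1"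
proof -
  show "0 \<le> genf P i t"
    unfolding genf_eq_expectation using pgf_monomial_bounds[OF assms] by (intro integral_nonneg_AE) auto
  have "genf P i t \<le> measure_pmf.expectation (P i) (\<lambda>_. 1)"
    unfolding genf_eq_expectation using pgf_monomial_bounds[OF assms] integrable_pgf_monomial[OF assms]
    by (intro integral_mono) auto
  then show "genf P i t \<le> 1" by simp
qed

lemma genf_mono:
  assumes "t \<in> unit_cube" "t' \<in> unit_cube" "\<And>j. t j \<le> t' j"
  shows "genf P i t \<le> genf P i t'"
proof -
  have "pgf_monomial t z \<le> pgf_monomial t' z" for z
    using assms unfolding pgf_monomial_def unit_cube_def
    by (intro prod_mono) (auto intro!: power_mono zero_le_power)
  then show ?thesis
    unfolding genf_eq_expectation using integrable_pgf_monomial assms(1,2) by (intro integral_mono) auto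
qed

lemma genfn_in_unit_cube: "s \<in> unit_cube \<Longrightarrow> genfn P n s \<in> unit_cube"
  by (induction n) (auto simp: unit_cube_def genf_bounds)

lemma genfn_mono:
  assumes "s \<in> unit_cube" "s' \<in> unit_cube" "\<And>j. s j \<le> s' j"
  shows "genfn P n s j \<le> genfn P n s' j"
  using assms(3) genfn_in_unit_cube[OF assms(1)] genfn_in_unit_cube[OF assms(2)]
  by (induction n arbitrary: j) (auto intro!: genf_mono)

lemma incseq_genfn_zero: "incseq (\<lambda>n. genfn P n (\<lambda>_. 0) j)"
proof (rule incseq_SucI)
  show "genfn P n (\<lambda>_. 0) j \<le> genfn P (Suc n) (\<lambda>_. 0) j" for n
  proof (induction n arbitrary: j)
    case 0 then show ?case using genf_bounds[OF unit_cube_zero] by simp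
  next
    case (Suc n) then show ?case
      using genfn_in_unit_cube[OF unit_cube_zero, of P n] genfn_in_unit_cube[OF unit_cube_zero, of P "Suc n"]
      by (auto intro!: genf_mono)
  qed
qed

lemma one_minus_genf_eq_nn_integral:
  assumes "t \<in> unit_cube"
  shows "ennreal (1 - genf P i t) = (\<integral>\<^sup>+ z. ennreal (1 - pgf_monomial t z) \<partial>measure_pmf (P i))"
proof -
  have "1 - genf P i t = measure_pmf.expectation (P i) (\<lambda>z. 1 - pgf_monomial t z)"
    unfolding genf_eq_expectation using integrable_pgf_monomial[OF assms] by simp
  then show ?thesis
    using integrable_pgf_monomial[OF assms] pgf_monomial_bounds[OF assms]
    by (simp add: nn_integral_eq_integral)
qed

definition offspring_dot :: "(nat \<Rightarrow> real) \<Rightarrow> (nat \<Rightarrow> nat) \<Rightarrow> ennreal" where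
  "offspring_dot x z = (\<Sum>j. ennreal (real (z j)) * ennreal (x j))"

lemma offspring_dot_finite:
  assumes "finite (supp z)" "\<And>j. 0 \<le> x j"
  shows "offspring_dot x z = ennreal (\<Sum>j\<in>supp z. real (z j) * x j)"
proof -
  have "offspring_dot x z = (\<Sum>j\<in>supp z. ennreal (real (z j)) * ennreal (x j))"
    unfolding offspring_dot_def by (rule suminf_finite[OF assms(1)]) (auto simp: supp_def)
  also have "\<dots> = ennreal (\<Sum>j\<in>supp z. real (z j) * x j)"
    using assms(2) by (simp add: ennreal_mult[symmetric] sum_ennreal)
  finally show ?thesis .
qed

lemma nn_integral_offspring_dot:
  "(\<integral>\<^sup>+ z. offspring_dot x z \<partial>measure_pmf (P i)) = (\<Sum>j. Mmat P i j * ennreal (x j))"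
  unfolding offspring_dot_def Mmat_def by (subst nn_integral_suminf) (auto simp: nn_integral_multc)

lemma one_minus_pgf_monomial_le:
  assumes "t \<in> unit_cube" "finite (supp z)"
  shows "1 - pgf_monomial t z \<le> (\<Sum>j\<in>supp z. real (z j) * (1 - t j))"
  using prod_power_ge_one_minus_sum[OF assms(2), of t z] assms(1)
  unfolding pgf_monomial_def unit_cube_def by auto

lemma one_minus_pgf_monomial_le_offspring_dot:
  assumes "t \<in> unit_cube" "finite (supp z)"
  shows "ennreal (1 - pgf_monomial t z) \<le> offspring_dot (\<lambda>j. 1 - t j) z"
  using one_minus_pgf_monomial_le[OF assms] assms
  by (subst offspring_dot_finite) (auto simp: unit_cube_def intro: ennreal_leI)

lemma one_minus_genf_le_Mmat:
  assumes "valid_offspring P" "t \<in> unit_cube"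
  shows "ennreal (1 - genf P i t) \<le> (\<Sum>j. Mmat P i j * ennreal (1 - t j))"
proof -
  have "ennreal (1 - genf P i t) = (\<integral>\<^sup>+ z. ennreal (1 - pgf_monomial t z) \<partial>measure_pmf (P i))"
    by (rule one_minus_genf_eq_nn_integral[OF assms(2)])
  also have "\<dots> \<le> (\<integral>\<^sup>+ z. offspring_dot (\<lambda>j. 1 - t j) z \<partial>measure_pmf (P i))"
    using assms(1) unfolding valid_offspring_def
    by (intro nn_integral_mono_AE)
      (auto simp: AE_measure_pmf_iff intro!: one_minus_pgf_monomial_le_offspring_dot[OF assms(2)])
  finally show ?thesis unfolding nn_integral_offspring_dot .
qed

lemma Mtot_eq_sum_Mmat:
  assumes "valid_offspring P" shows "Mtot P i = (\<Sum>j. Mmat P i j)"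
proof -
  have "Mtot P i = (\<integral>\<^sup>+ z. offspring_dot (\<lambda>_. 1) z \<partial>measure_pmf (P i))"
    unfolding Mtot_def using assms unfolding valid_offspring_def
    by (intro nn_integral_cong_AE) (auto simp: AE_measure_pmf_iff offspring_dot_finite Ztot_def)
  then show ?thesis unfolding nn_integral_offspring_dot by simp
qed

section \<open>Nonnegative infinite matrices\<close>

lemma suminf_ennreal_commute: "(\<Sum>i. \<Sum>j. f i j :: ennreal) = (\<Sum>j. \<Sum>i. f i j)"
proof -
  have "(\<Sum>i. \<Sum>j. f i j) = (\<Sum>i. \<integral>\<^sup>+ j. f i j \<partial>count_space UNIV)"
    by (simp add: nn_integral_count_space_nat)
  also have "\<dots> = (\<integral>\<^sup>+ j. (\<Sum>i. f i j) \<partial>count_space UNIV)"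
    by (rule nn_integral_suminf[symmetric]) auto
  also have "\<dots> = (\<Sum>j. \<Sum>i. f i j)" by (simp add: nn_integral_count_space_nat)
  finally show ?thesis .
qed

lemma AE_eq_if_le_and_nn_integral_eq:
  fixes f g :: "'a \<Rightarrow> ennreal"
  assumes "f \<in> borel_measurable M" "g \<in> borel_measurable M" "AE x in M. f x \<le> g x"
    and "integral\<^sup>N M f = integral\<^sup>N M g" "integral\<^sup>N M f \<noteq> \<top>"
  shows "AE x in M. f x = g x"
proof -
  have "(\<integral>\<^sup>+ x. g x - f x \<partial>M) = 0"
    using assms by (simp add: nn_integral_diff ennreal_diff_self)
  then have "AE x in M. g x - f x = 0" using assms by (subst nn_integral_0_iff_AE[symmetric]) auto
  then show ?thesis using assms(3) by eventually_elim (auto dest: ennreal_minus_eq_0)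
qed

lemma eq_if_le_and_weighted_suminf_eq:
  fixes a b :: "nat \<Rightarrow> ennreal" and v :: "nat \<Rightarrow> real"
  assumes "\<And>i. a i \<le> b i" "\<And>i. 0 < v i"
    and "(\<Sum>i. ennreal (v i) * a i) = (\<Sum>i. ennreal (v i) * b i)" "(\<Sum>i. ennreal (v i) * a i) \<noteq> \<top>"
  shows "a i = b i"
proof -
  have "AE i in count_space UNIV. ennreal (v i) * a i = ennreal (v i) * b i"
  proof (rule AE_eq_if_le_and_nn_integral_eq)
    show "AE i in count_space UNIV. ennreal (v i) * a i \<le> ennreal (v i) * b i"
      using assms(1) by (intro AE_I2 mult_left_mono) auto
  qed (use assms(3,4) in \<open>simp_all add: nn_integral_count_space_nat\<close>)
  then have "ennreal (v i) * a i = ennreal (v i) * b i" by (simp add: AE_count_space)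
  then show ?thesis using assms(2)[of i] by (simp add: ennreal_mult_cancel_left)
qed

lemma suminf_left_eigenvector:
  assumes "\<And>j. (\<Sum>i. ennreal (v i) * Mmat P i j) = ennreal (v j)"
  shows "(\<Sum>i. ennreal (v i) * (\<Sum>j. Mmat P i j * y j)) = (\<Sum>j. ennreal (v j) * y j)"
proof -
  have "(\<Sum>i. ennreal (v i) * (\<Sum>j. Mmat P i j * y j)) = (\<Sum>i. \<Sum>j. ennreal (v i) * Mmat P i j * y j)"
    by (simp only: ennreal_suminf_cmult mult.assoc)
  also have "\<dots> = (\<Sum>j. (\<Sum>i. ennreal (v i) * Mmat P i j) * y j)"
    by (simp only: suminf_ennreal_commute[of "\<lambda>i j. ennreal (v i) * Mmat P i j * y j"]
        ennreal_suminf_multc)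
  also have "\<dots> = (\<Sum>j. ennreal (v j) * y j)" using assms by simp
  finally show ?thesis .
qed

lemma suminf_Mpow_fixed_vector:
  assumes "\<And>i. (\<Sum>j. Mmat P i j * x j) = x i"
  shows "(\<Sum>k. Mpow P n i k * x k) = x i"
proof (induction n arbitrary: i)
  case 0
  have "(\<Sum>k. Mpow P 0 i k * x k) = (\<Sum>k\<in>{i}. Mpow P 0 i k * x k)"
    by (rule suminf_finite) auto
  then show ?case by simp
next
  case (Suc n)
  have "(\<Sum>k. Mpow P (Suc n) i k * x k) = (\<Sum>k. \<Sum>l. Mpow P n i l * (Mmat P l k * x k))"
    by (simp only: Mpow.simps ennreal_suminf_multc[symmetric] mult.assoc)
  also have "\<dots> = (\<Sum>l. \<Sum>k. Mpow P n i l * (Mmat P l k * x k))"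
    by (rule suminf_ennreal_commute)
  also have "\<dots> = (\<Sum>l. Mpow P n i l * x l)" using assms by simp
  finally show ?case using Suc by simp
qed

lemma fixed_vector_pos_if_irreducible:
  assumes "\<And>i. (\<Sum>j. Mmat P i j * x j) = x i" "\<forall>i j. \<exists>n\<ge>1. 0 < Mpow P n i j" "0 < x k"
  shows "0 < x i"
proof -
  obtain n where n: "0 < Mpow P n i k" using assms(2) by blast
  have "Mpow P n i k * x k \<le> (\<Sum>l. Mpow P n i l * x l)"
    using sum_le_suminf[of "\<lambda>l. Mpow P n i l * x l" "{k}"] by (simp add: summableI)
  also have "\<dots> = x i" by (rule suminf_Mpow_fixed_vector[OF assms(1)])
  finally show ?thesis using n assms(3)
    by (metis ennreal_zero_less_mult_iff order_less_le_trans)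
qed

section \<open>Certain extinction\<close>

definition extinction_prob :: "(nat \<Rightarrow> (nat \<Rightarrow> nat) pmf) \<Rightarrow> nat \<Rightarrow> real" where
  "extinction_prob P j = (SUP n. genfn P n (\<lambda>_. 0) j)"

lemma LIMSEQ_extinction_prob: "(\<lambda>n. genfn P n (\<lambda>_. 0) j) \<longlonglongrightarrow> extinction_prob P j"
  unfolding extinction_prob_def
  using genfn_in_unit_cube[OF unit_cube_zero]
  by (intro LIMSEQ_incseq_SUP incseq_genfn_zero bdd_aboveI[where M=1]) (auto simp: unit_cube_def)

lemma extinction_prob_in_unit_cube: "extinction_prob P \<in> unit_cube"
  using genfn_in_unit_cube[OF unit_cube_zero, of P]
  by (auto simp: unit_cube_def intro: LIMSEQ_le_const[OF LIMSEQ_extinction_prob]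
      LIMSEQ_le_const2[OF LIMSEQ_extinction_prob])

lemma genf_extinction_prob: "genf P i (extinction_prob P) = extinction_prob P i"
proof -
  let ?a = "\<lambda>n. genfn P n (\<lambda>_. 0)"
  have "(\<lambda>n. measure_pmf.expectation (P i) (pgf_monomial (?a n)))
      \<longlonglongrightarrow> measure_pmf.expectation (P i) (pgf_monomial (extinction_prob P))"
    using pgf_monomial_bounds[OF genfn_in_unit_cube[OF unit_cube_zero]]
    by (intro integral_dominated_convergence[where w="\<lambda>_. 1"])
      (auto simp: pgf_monomial_def intro!: tendsto_prod tendsto_power LIMSEQ_extinction_prob)
  then have "(\<lambda>n. ?a (Suc n) i) \<longlonglongrightarrow> genf P i (extinction_prob P)" by (simp add: genf_eq_expectation)
  then show ?thesis using LIMSEQ_Suc[OF LIMSEQ_extinction_prob] by (rule LIMSEQ_unique)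
qed

lemma Ztot_le_one_if_linear_bound_attained:
  assumes V: "valid_offspring P" and t: "t \<in> unit_cube" "\<And>j. t j < 1"
    and eq: "ennreal (1 - genf P i t) = (\<Sum>j. Mmat P i j * ennreal (1 - t j))"
    and z: "z \<in> set_pmf (P i)"
  shows "Ztot z \<le> 1"
proof -
  have fin: "finite (supp z)" using V z by (auto simp: valid_offspring_def)
  have "AE y in measure_pmf (P i). ennreal (1 - pgf_monomial t y) = offspring_dot (\<lambda>j. 1 - t j) y"
    using V eq
    by (intro AE_eq_if_le_and_nn_integral_eq)
      (auto simp: AE_measure_pmf_iff valid_offspring_def nn_integral_offspring_dot
        one_minus_genf_eq_nn_integral[OF t(1), symmetric]
        intro!: one_minus_pgf_monomial_le_offspring_dot[OF t(1)])
  then have "ennreal (1 - pgf_monomial t z) = ennreal (\<Sum>j\<in>supp z. real (z j) * (1 - t j))"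
    using z t(1) by (simp add: AE_measure_pmf_iff offspring_dot_finite[OF fin] unit_cube_def)
  then have tight: "1 - pgf_monomial t z = (\<Sum>j\<in>supp z. real (z j) * (1 - t j))"
    using t(1) pgf_monomial_bounds[OF t(1), of z]
    by (subst (asm) ennreal_inj) (auto simp: unit_cube_def intro!: sum_nonneg)
  show ?thesis
  proof (rule ccontr)
    assume "\<not> Ztot z \<le> 1"
    then have "2 \<le> (\<Sum>j\<in>supp z. z j)" by (simp add: Ztot_def)
    then have "1 - (\<Sum>j\<in>supp z. real (z j) * (1 - t j)) < pgf_monomial t z"
      unfolding pgf_monomial_def using t by (intro prod_power_gt_one_minus_sum[OF fin])
        (auto simp: unit_cube_def)
    then show False using tight by simp
  qed
qed

lemma Ztot_eq_one_if_le_one: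
  assumes V: "valid_offspring P" and le1: "\<And>i z. z \<in> set_pmf (P i) \<Longrightarrow> Ztot z \<le> 1"
    and v: "\<And>j. 0 < v j" "\<And>j. (\<Sum>i. ennreal (v i) * Mmat P i j) = ennreal (v j)"
      "(\<Sum>j. ennreal (v j)) \<noteq> \<top>"
    and z: "z \<in> set_pmf (P i)"
  shows "Ztot z = 1"
proof -
  have AE_le1: "AE z in measure_pmf (P k). ennreal (real (Ztot z)) \<le> 1" for k
    using le1 by (simp add: AE_measure_pmf_iff)
  have Mtot_le: "Mtot P k \<le> 1" for k
    using nn_integral_mono_AE[OF AE_le1[of k]] by (simp add: Mtot_def)
  have "(\<Sum>k. ennreal (v k) * Mtot P k) = (\<Sum>k. ennreal (v k) * (\<Sum>j. Mmat P k j * 1))"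
    by (simp only: Mtot_eq_sum_Mmat[OF V] mult_1_right)
  also have "\<dots> = (\<Sum>k. ennreal (v k) * 1)" by (rule suminf_left_eigenvector[OF v(2)])
  finally have "Mtot P i = 1"
    using eq_if_le_and_weighted_suminf_eq[of "Mtot P" "\<lambda>_. 1" v, OF Mtot_le v(1)] v(3) by simp
  then have "AE z in measure_pmf (P i). ennreal (real (Ztot z)) = 1"
    using AE_le1 by (intro AE_eq_if_le_and_nn_integral_eq) (simp_all add: Mtot_def)
  then show ?thesis using z by (simp add: AE_measure_pmf_iff)
qed

lemma Ztot_eq_oneE:
  assumes "finite (supp z)" "Ztot z = 1"
  obtains j where "supp z = {j}" "z j = 1"
proof -
  have "(\<Sum>k\<in>supp z. z k) = Suc 0" using assms(2) by (simp add: Ztot_def)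
  then obtain j where j: "j \<in> supp z" "z j = Suc 0" "\<forall>k\<in>supp z. j \<noteq> k \<longrightarrow> z k = 0"
    unfolding sum_eq_Suc0_iff[OF assms(1)] by blast
  have "k = j" if k: "k \<in> supp z" for k
  proof (rule ccontr)
    assume "k \<noteq> j"
    then have "z k = 0" using bspec[OF j(3) k] by auto
    then show False using k by (simp add: supp_def)
  qed
  then have "supp z = {j}" using j(1) by blast
  then show thesis using j(2) by (intro that) simp_all
qed

lemma linear_if_Ztot_eq_one:
  assumes V: "valid_offspring P" and one: "\<And>i z. z \<in> set_pmf (P i) \<Longrightarrow> Ztot z = 1"
  shows "\<not> F_not_linear P"
  unfolding F_not_linear_def not_not
proof (intro allI impI)
  fix i and s :: "nat \<Rightarrow> real" assume "\<forall>j. 0 \<le> s j \<and> s j \<le> 1"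
  then have s: "s \<in> unit_cube" by (simp add: unit_cube_def)
  have "ennreal (pgf_monomial s z) = offspring_dot s z" if z: "z \<in> set_pmf (P i)" for z
  proof -
    have fin: "finite (supp z)" using V z by (simp add: valid_offspring_def)
    obtain j where "supp z = {j}" "z j = 1" using Ztot_eq_oneE[OF fin one[OF z]] .
    then show ?thesis using fin s by (simp add: pgf_monomial_def offspring_dot_finite unit_cube_def)
  qed
  then have "(\<integral>\<^sup>+ z. ennreal (pgf_monomial s z) \<partial>measure_pmf (P i))
      = (\<integral>\<^sup>+ z. offspring_dot s z \<partial>measure_pmf (P i))"
    by (intro nn_integral_cong_AE) (simp add: AE_measure_pmf_iff)
  then have "ennreal (genf P i s) = (\<Sum>j. Mmat P i j * ennreal (s j))"
    unfolding genf_eq_expectation nn_integral_offspring_dot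
    using integrable_pgf_monomial[OF s] pgf_monomial_bounds[OF s] by (simp add: nn_integral_eq_integral)
  then show "genf P i s = enn2real (\<Sum>j. Mmat P i j * ennreal (s j))"
    using genf_bounds[OF s] by (metis enn2real_ennreal)
qed

lemma extinction_prob_eq_one:
  assumes V: "valid_offspring P" and irr: "\<forall>i j. \<exists>n\<ge>1. 0 < Mpow P n i j"
    and v: "\<And>j. 0 < v j" "\<And>j. (\<Sum>i. ennreal (v i) * Mmat P i j) = ennreal (v j)"
      "(\<Sum>j. ennreal (v j)) = 1"
    and NL: "F_not_linear P"
  shows "extinction_prob P k = 1"
proof (rule ccontr)
  assume k: "extinction_prob P k \<noteq> 1"
  let ?q = "extinction_prob P"
  define x where "x j = ennreal (1 - ?q j)" for j
  have q: "0 \<le> ?q j \<and> ?q j \<le> 1" for j using extinction_prob_in_unit_cube by (simp add: unit_cube_def)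
  have linear_bound: "x i \<le> (\<Sum>j. Mmat P i j * x j)" for i
    using one_minus_genf_le_Mmat[OF V extinction_prob_in_unit_cube[of P], of i]
    by (simp add: x_def genf_extinction_prob)
  have "ennreal (v i) * x i \<le> ennreal (v i)" for i
    using mult_left_mono[of "x i" 1 "ennreal (v i)"] q[of i] by (simp add: x_def)
  then have "(\<Sum>i. ennreal (v i) * x i) \<le> (\<Sum>i. ennreal (v i))"
    by (intro suminf_le) (auto intro: summableI)
  then have finite: "(\<Sum>i. ennreal (v i) * x i) \<noteq> \<top>"
    using v(3) by (metis ennreal_one_neq_top top.extremum_uniqueI)
  have x_fixed: "(\<Sum>j. Mmat P i j * x j) = x i" for i
    using eq_if_le_and_weighted_suminf_eq[of x "\<lambda>i. \<Sum>j. Mmat P i j * x j" v, OF linear_bound v(1)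
        suminf_left_eigenvector[OF v(2), of x, symmetric] finite]
    by (rule sym)
  have "0 < x k" using k q[of k] by (simp add: x_def)
  then have "0 < x i" for i by (rule fixed_vector_pos_if_irreducible[OF x_fixed irr])
  then have q_lt: "?q i < 1" for i by (simp add: x_def)
  have "ennreal (1 - genf P i ?q) = (\<Sum>j. Mmat P i j * ennreal (1 - ?q j))" for i
    using x_fixed[of i] by (simp add: x_def genf_extinction_prob)
  then have "Ztot z \<le> 1" if "z \<in> set_pmf (P i)" for i z
    using Ztot_le_one_if_linear_bound_attained[OF V extinction_prob_in_unit_cube q_lt] that by blast
  then have "Ztot z = 1" if "z \<in> set_pmf (P i)" for i z
    using Ztot_eq_one_if_le_one[OF V _ v(1,2) _ that] v(3) by simp
  then show False using linear_if_Ztot_eq_one[OF V] NL by blast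
qed

section \<open>Uniform decay of the non-extinction probabilities\<close>

lemma weighted_survival_LIMSEQ_zero:
  assumes "summable v" "\<And>j. 0 \<le> v j" "\<And>j. extinction_prob P j = 1"
  shows "(\<lambda>n. \<Sum>j. v j * (1 - genfn P n (\<lambda>_. 0) j)) \<longlonglongrightarrow> 0"
proof -
  have a: "0 \<le> genfn P n (\<lambda>_. 0) j \<and> genfn P n (\<lambda>_. 0) j \<le> 1" for n j
    using genfn_in_unit_cube[OF unit_cube_zero] by (simp add: unit_cube_def)
  have bound: "\<forall>\<^sub>F (j, n) in at_top \<times>\<^sub>F sequentially. norm (v j * (1 - genfn P n (\<lambda>_. 0) j)) \<le> v j"
    using a assms(2) by (intro always_eventually) (auto simp: abs_mult mult_left_le)
  have "(\<lambda>n. v j * (1 - genfn P n (\<lambda>_. 0) j)) \<longlonglongrightarrow> v j * (1 - extinction_prob P j)" for j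
    by (intro tendsto_intros LIMSEQ_extinction_prob)
  from tannerys_theorem[OF this bound assms(1)]
  have "(\<lambda>n. \<Sum>j. v j * (1 - genfn P n (\<lambda>_. 0) j)) \<longlonglongrightarrow> (\<Sum>j. v j * (1 - extinction_prob P j))"
    by simp
  then show ?thesis using assms(3) by simp
qed

lemma Qn_Suc_le_weighted_survival:
  assumes V: "valid_offspring P" and v: "\<And>j. 0 \<le> v j" "summable v"
    and M: "\<And>i j. Mmat P i j \<le> ennreal (C * u i * v j)" and C: "0 < C"
    and u: "\<And>i. 0 < u i \<and> u i \<le> U" and s: "s \<in> unit_cube"
  shows "Qn P (Suc n) s i \<le> C * U * (\<Sum>j. v j * (1 - genfn P n (\<lambda>_. 0) j))"
proof -
  let ?a = "genfn P n (\<lambda>_. 0)"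
  define w where "w = (\<Sum>j. v j * (1 - ?a j))"
  have a: "0 \<le> ?a j \<and> ?a j \<le> 1" for j
    using genfn_in_unit_cube[OF unit_cube_zero] by (simp add: unit_cube_def)
  have terms: "0 \<le> v j * (1 - ?a j)" "v j * (1 - ?a j) \<le> v j" for j
    using a[of j] v(1)[of j] by (auto simp: mult_left_le)
  have w_sums: "summable (\<lambda>j. v j * (1 - ?a j))"
    using terms by (intro summable_comparison_test[OF _ v(2)]) auto
  have w: "0 \<le> w" unfolding w_def using terms w_sums by (simp add: suminf_nonneg)
  have "ennreal (1 - genf P i ?a) \<le> (\<Sum>j. Mmat P i j * ennreal (1 - ?a j))"
    by (rule one_minus_genf_le_Mmat[OF V genfn_in_unit_cube[OF unit_cube_zero]])
  also have "\<dots> \<le> (\<Sum>j. ennreal (C * u i) * ennreal (v j * (1 - ?a j)))"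
  proof (intro suminf_le summableI)
    fix j
    have "Mmat P i j * ennreal (1 - ?a j) \<le> ennreal (C * u i * v j) * ennreal (1 - ?a j)"
      using M by (rule mult_right_mono) simp
    also have "\<dots> = ennreal (C * u i) * ennreal (v j * (1 - ?a j))"
      using C u[of i] v(1)[of j] a[of j] by (simp add: ennreal_mult[symmetric] mult.assoc)
    finally show "Mmat P i j * ennreal (1 - ?a j) \<le> ennreal (C * u i) * ennreal (v j * (1 - ?a j))" .
  qed
  also have "\<dots> = ennreal (C * u i * w)"
    using C u[of i] w terms w_sums by (simp add: w_def suminf_ennreal2 ennreal_mult)
  finally have "1 - genf P i ?a \<le> C * u i * w"
    using C u[of i] w by (simp add: ennreal_le_iff)
  also have "\<dots> \<le> C * U * w" using C u[of i] w by (intro mult_right_mono) auto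
  finally show ?thesis
    using genfn_mono[OF unit_cube_zero s, of P "Suc n" i] s
    by (simp add: Qn_def w_def unit_cube_def)
qed

section \<open>The bound on \<open>\<epsilon>\<^sub>1\<close>\<close>

lemma Qsup_bounds:
  assumes "s \<in> unit_cube"
  shows "Qn P m s j \<le> Qsup P m s" "0 \<le> Qsup P m s"
    and "(\<And>j. Qn P m s j \<le> G) \<Longrightarrow> Qsup P m s \<le> G"
proof -
  have Q: "0 \<le> Qn P m s j \<and> Qn P m s j \<le> 1" for j
    using genfn_in_unit_cube[OF assms] by (simp add: Qn_def unit_cube_def)
  then have "bdd_above (range (Qn P m s))" by (auto intro: bdd_aboveI[where M=1])
  then show le: "Qn P m s j \<le> Qsup P m s" for j unfolding Qsup_def by (simp add: cSUP_upper)
  show "0 \<le> Qsup P m s" using Q[of 0] le[of 0] by linarith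
  show "(\<And>j. Qn P m s j \<le> G) \<Longrightarrow> Qsup P m s \<le> G" unfolding Qsup_def by (simp add: cSUP_least)
qed

lemma integrable_if_le_Ztot:
  assumes "Mtot P i \<noteq> \<top>" "\<And>z. z \<in> set_pmf (P i) \<Longrightarrow> \<bar>f z\<bar> \<le> real (Ztot z)"
  shows "integrable (measure_pmf (P i)) f"
proof (rule integrableI_bounded)
  have "(\<integral>\<^sup>+ z. ennreal (norm (f z)) \<partial>measure_pmf (P i)) \<le> Mtot P i"
    unfolding Mtot_def using assms(2) by (intro nn_integral_mono_AE) (auto simp: AE_measure_pmf_iff)
  then show "(\<integral>\<^sup>+ z. ennreal (norm (f z)) \<partial>measure_pmf (P i)) < \<infinity>"
    using assms(1) by (simp add: less_top order_le_less_trans)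
qed simp

lemma expectation_Ztot:
  assumes "Mtot P i \<noteq> \<top>"
  shows "measure_pmf.expectation (P i) (\<lambda>z. real (Ztot z)) = enn2real (Mtot P i)"
  using integrable_if_le_Ztot[OF assms, of "\<lambda>z. real (Ztot z)"]
  by (simp add: Mtot_def nn_integral_eq_integral)

lemma Nfun_integrand_bounds:
  assumes t: "t \<in> unit_cube" and fin: "finite (supp z)" and q: "\<And>l. 1 - t l \<le> q"
  shows "0 \<le> (\<Sum>k<z j. t j ^ k) * (1 - (\<Prod>l\<in>{l\<in>supp z. j < l}. t l ^ z l))"
    and "(\<Sum>k<z j. t j ^ k) * (1 - (\<Prod>l\<in>{l\<in>supp z. j < l}. t l ^ z l))
         \<le> real (z j) * min 1 (real (Ztot z) * q)"
proof -
  have t01: "0 \<le> t l \<and> t l \<le> 1" for l using t by (simp add: unit_cube_def)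
  let ?A = "\<Sum>k<z j. t j ^ k" and ?R = "\<Prod>l\<in>{l\<in>supp z. j < l}. t l ^ z l"
  have A: "0 \<le> ?A" "?A \<le> real (z j)"
    using t01 sum_bounded_above[of "{..<z j}" "\<lambda>k. t j ^ k" 1] by (auto intro!: sum_nonneg power_le_one)
  have R: "0 \<le> ?R" "?R \<le> 1" using t01 by (auto intro!: prod_nonneg prod_le_1 power_le_one)
  have "pgf_monomial t z = (\<Prod>l\<in>supp z - {l\<in>supp z. j < l}. t l ^ z l) * ?R"
    unfolding pgf_monomial_def by (rule prod.subset_diff) (use fin in auto)
  also have "\<dots> \<le> 1 * ?R"
    using t01 R by (intro mult_right_mono prod_le_1) (auto intro: power_le_one)
  finally have "1 - ?R \<le> (\<Sum>l\<in>supp z. real (z l) * (1 - t l))"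
    using one_minus_pgf_monomial_le[OF t fin] by linarith
  also have "\<dots> \<le> (\<Sum>l\<in>supp z. real (z l) * q)" using q by (intro sum_mono mult_left_mono) auto
  finally have "1 - ?R \<le> min 1 (real (Ztot z) * q)"
    using R by (simp add: Ztot_def sum_distrib_right)
  then show "0 \<le> ?A * (1 - ?R)" "?A * (1 - ?R) \<le> real (z j) * min 1 (real (Ztot z) * q)"
    using A R by (auto intro!: mult_mono)
qed

lemma sum_lessThan_le_Ztot:
  assumes "finite (supp z)" shows "(\<Sum>j<N. real (z j)) \<le> real (Ztot z)"
proof -
  have "(\<Sum>j<N. z j) = (\<Sum>j\<in>{..<N} \<inter> supp z. z j)"
    by (rule sum.mono_neutral_right) (auto simp: supp_def)
  also have "\<dots> \<le> Ztot z" unfolding Ztot_def using assms by (intro sum_mono2) auto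
  finally show ?thesis by (simp flip: of_nat_sum)
qed

lemma sum_Nfun_le:
  assumes V: "valid_offspring P" and t: "t \<in> unit_cube" and M: "Mtot P i \<noteq> \<top>"
    and q: "\<And>l. 1 - t l \<le> q"
  shows "summable (\<lambda>j. (1 - t j) * Nfun P i j t)" and "0 \<le> (\<Sum>j. (1 - t j) * Nfun P i j t)"
    and "(\<Sum>j. (1 - t j) * Nfun P i j t)
      \<le> q * measure_pmf.expectation (P i) (\<lambda>z. real (Ztot z) * min 1 (real (Ztot z) * q))"
proof -
  define \<phi> where "\<phi> z = min 1 (real (Ztot z) * q)" for z
  define n where "n j z = (\<Sum>k<z j. t j ^ k) * (1 - (\<Prod>l\<in>{l\<in>supp z. j < l}. t l ^ z l))" for j z
  have fin: "finite (supp z)" if "z \<in> set_pmf (P i)" for z using V that by (simp add: valid_offspring_def)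
  have "t 0 \<le> 1" using t by (simp add: unit_cube_def)
  then have q0: "0 \<le> q" using q[of 0] by linarith
  have \<phi>: "0 \<le> \<phi> z" "\<phi> z \<le> 1" for z using q0 by (auto simp: \<phi>_def)
  have n: "0 \<le> n j z" "n j z \<le> real (z j) * \<phi> z" if "z \<in> set_pmf (P i)" for j z
    using Nfun_integrand_bounds[OF t fin[OF that] q] by (simp_all add: n_def \<phi>_def)
  have z\<phi>: "0 \<le> real (z j) * \<phi> z" "real (z j) * \<phi> z \<le> real (Ztot z)"
    if "z \<in> set_pmf (P i)" for j z
  proof -
    show "0 \<le> real (z j) * \<phi> z" using \<phi> by simp
    have "real (z j) * \<phi> z \<le> (\<Sum>k<Suc j. real (z k))"
      using \<phi>[of z] mult_left_le[of "\<phi> z" "real (z j)"] sum_nonneg[of "{..<j}" "\<lambda>k. real (z k)"]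
      by simp
    also have "\<dots> \<le> real (Ztot z)" by (rule sum_lessThan_le_Ztot[OF fin[OF that]])
    finally show "real (z j) * \<phi> z \<le> real (Ztot z)" .
  qed
  have int_z\<phi>: "integrable (measure_pmf (P i)) (\<lambda>z. real (z j) * \<phi> z)" for j
    using z\<phi> by (intro integrable_if_le_Ztot[OF M]) auto
  have int_n: "integrable (measure_pmf (P i)) (n j)" for j
    using n z\<phi> by (intro integrable_if_le_Ztot[OF M]) (metis abs_of_nonneg order_trans)
  have N: "0 \<le> Nfun P i j t" "Nfun P i j t \<le> measure_pmf.expectation (P i) (\<lambda>z. real (z j) * \<phi> z)" for j
    unfolding Nfun_def n_def[symmetric] using n
    by (auto intro!: integral_nonneg_AE integral_mono_AE int_n int_z\<phi> simp: AE_measure_pmf_iff)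
  have terms: "0 \<le> (1 - t j) * Nfun P i j t" for j using N t by (simp add: unit_cube_def)
  have partial: "(\<Sum>j<N. (1 - t j) * Nfun P i j t)
      \<le> q * measure_pmf.expectation (P i) (\<lambda>z. real (Ztot z) * \<phi> z)" for N
  proof -
    have "(\<Sum>j<N. (1 - t j) * Nfun P i j t)
        \<le> (\<Sum>j<N. q * measure_pmf.expectation (P i) (\<lambda>z. real (z j) * \<phi> z))"
      using q N q0 by (intro sum_mono mult_mono) auto
    also have "\<dots> = q * measure_pmf.expectation (P i) (\<lambda>z. (\<Sum>j<N. real (z j)) * \<phi> z)"
      using int_z\<phi> by (simp add: sum_distrib_left sum_distrib_right)
    also have "\<dots> \<le> q * measure_pmf.expectation (P i) (\<lambda>z. real (Ztot z) * \<phi> z)"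
    proof (intro mult_left_mono integral_mono_AE q0)
      show "integrable (measure_pmf (P i)) (\<lambda>z. (\<Sum>j<N. real (z j)) * \<phi> z)"
        using int_z\<phi> by (simp add: sum_distrib_right)
      show "integrable (measure_pmf (P i)) (\<lambda>z. real (Ztot z) * \<phi> z)"
        using \<phi> by (intro integrable_if_le_Ztot[OF M]) (simp add: abs_mult mult_left_le)
      show "AE z in measure_pmf (P i). (\<Sum>j<N. real (z j)) * \<phi> z \<le> real (Ztot z) * \<phi> z"
        using \<phi> sum_lessThan_le_Ztot[OF fin] by (auto simp: AE_measure_pmf_iff intro: mult_right_mono)
    qed
    finally show ?thesis .
  qed
  show summable: "summable (\<lambda>j. (1 - t j) * Nfun P i j t)" by (rule summableI_nonneg_bounded[OF terms partial])
  show "0 \<le> (\<Sum>j. (1 - t j) * Nfun P i j t)" by (rule suminf_nonneg[OF summable terms])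
  show "(\<Sum>j. (1 - t j) * Nfun P i j t)
      \<le> q * measure_pmf.expectation (P i) (\<lambda>z. real (Ztot z) * min 1 (real (Ztot z) * q))"
    using summable partial unfolding \<phi>_def by (rule suminf_le_const)
qed

lemma mult_min_le_truncation:
  fixes q G :: real
  assumes "0 \<le> q" "q \<le> G"
  shows "real n * min 1 (real n * q) \<le> real K * G * real n + (if K < n then real n else 0)"
proof (cases "K < n")
  case True
  have "real n * min 1 (real n * q) \<le> real n" by (rule mult_left_le) simp_all
  moreover have "0 \<le> real K * G * real n" using assms by simp
  ultimately have "real n * min 1 (real n * q) \<le> real K * G * real n + real n" by linarith
  then show ?thesis using True by simp
next
  case False
  have "real n * min 1 (real n * q) \<le> real n * (real K * G)"
    using False assms by (intro mult_left_mono min.coboundedI2 mult_mono) auto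
  then show ?thesis using False by (simp add: algebra_simps)
qed

lemma expectation_Ztot_min_le_truncation:
  assumes M: "Mtot P i \<noteq> \<top>" and q: "0 \<le> q" "q \<le> G"
  shows "measure_pmf.expectation (P i) (\<lambda>z. real (Ztot z) * min 1 (real (Ztot z) * q))
    \<le> real K * G * enn2real (Mtot P i)
       + measure_pmf.expectation (P i) (\<lambda>z. if K < Ztot z then real (Ztot z) else 0)"
proof -
  let ?T = "\<lambda>z. if K < Ztot z then real (Ztot z) else 0"
  have int_Z: "integrable (measure_pmf (P i)) (\<lambda>z. real (Ztot z))"
    and int_T: "integrable (measure_pmf (P i)) ?T"
    by (auto intro: integrable_if_le_Ztot[OF M])
  have "measure_pmf.expectation (P i) (\<lambda>z. real (Ztot z) * min 1 (real (Ztot z) * q))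
      \<le> measure_pmf.expectation (P i) (\<lambda>z. real K * G * real (Ztot z) + ?T z)"
  proof (rule integral_mono)
    show "integrable (measure_pmf (P i)) (\<lambda>z. real (Ztot z) * min 1 (real (Ztot z) * q))"
      using q by (intro integrable_if_le_Ztot[OF M]) (simp add: abs_mult mult_left_le)
    show "integrable (measure_pmf (P i)) (\<lambda>z. real K * G * real (Ztot z) + ?T z)"
      using int_Z int_T by simp
    show "real (Ztot z) * min 1 (real (Ztot z) * q) \<le> real K * G * real (Ztot z) + ?T z" for z
      using q by (rule mult_min_le_truncation)
  qed
  also have "\<dots> = real K * G * enn2real (Mtot P i) + measure_pmf.expectation (P i) ?T"
    using int_Z int_T expectation_Ztot[OF M] by simp
  finally show ?thesis .
qed

lemma eps1_div_Qsup_le_expectation: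
  assumes V: "valid_offspring P" and s: "s \<in> unit_cube" and M: "Mtot P i \<noteq> \<top>"
  shows "\<bar>eps1 P m s i\<bar> / Qsup P m s
    \<le> measure_pmf.expectation (P i) (\<lambda>z. real (Ztot z) * min 1 (real (Ztot z) * Qsup P m s))
       / enn2real (Mtot P i)"
proof -
  define t where "t = genfn P m s"
  define q where "q = Qsup P m s"
  define S where "S = (\<Sum>j. (1 - t j) * Nfun P i j t)"
  define E where "E = measure_pmf.expectation (P i) (\<lambda>z. real (Ztot z) * min 1 (real (Ztot z) * q))"
  have t: "t \<in> unit_cube" unfolding t_def by (rule genfn_in_unit_cube[OF s])
  have q: "1 - t l \<le> q" "0 \<le> q" for l using Qsup_bounds[OF s] by (auto simp: q_def t_def Qn_def)
  have S: "0 \<le> S" "S \<le> q * E" unfolding S_def E_def using sum_Nfun_le[OF V t M q(1)] by auto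
  have "0 \<le> E" unfolding E_def using q(2) by (intro integral_nonneg_AE AE_I2) simp
  then have "S / q \<le> E" using S q(2) by (cases "q = 0") (simp_all add: pos_divide_le_eq mult.commute)
  then have "(S / q) / enn2real (Mtot P i) \<le> E / enn2real (Mtot P i)" by (rule divide_right_mono) simp
  moreover have "\<bar>eps1 P m s i\<bar> / q = (S / q) / enn2real (Mtot P i)"
    using S(1) by (simp add: eps1_def S_def t_def Qn_def)
  ultimately show ?thesis unfolding q_def[symmetric] E_def[symmetric] by simp
qed

lemma eps1_div_Qsup_le:
  assumes V: "valid_offspring P" and s: "s \<in> unit_cube" and G: "\<And>j. Qn P m s j \<le> G"
  shows "ennreal (\<bar>eps1 P m s i\<bar> / Qsup P m s)
    \<le> ennreal (real K * G)
       + (\<integral>\<^sup>+ z. ennreal (if K < Ztot z then real (Ztot z) else 0) \<partial>measure_pmf (P i)) / Mtot P i"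
proof (cases "Mtot P i = \<top> \<or> Mtot P i = 0")
  case True
  \<comment> \<open>then enn2real (Mtot P i) = 0, so eps1 vanishes by the convention x / 0 = 0\<close>
  then show ?thesis by (auto simp: eps1_def)
next
  case False
  define T where "T = (\<lambda>z. if K < Ztot z then real (Ztot z) else 0)"
  define Mr where "Mr = enn2real (Mtot P i)"
  have M: "Mtot P i \<noteq> \<top>" "Mtot P i = ennreal Mr" "0 < Mr"
    using False by (cases "Mtot P i"; auto simp: Mr_def)+
  have q: "0 \<le> Qsup P m s" "Qsup P m s \<le> G" using Qsup_bounds[OF s] G by auto
  have ET: "0 \<le> measure_pmf.expectation (P i) T" by (simp add: T_def)
  have "\<bar>eps1 P m s i\<bar> / Qsup P m s \<le> (real K * G * Mr + measure_pmf.expectation (P i) T) / Mr"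
    using order_trans[OF eps1_div_Qsup_le_expectation[OF V s M(1)]
        divide_right_mono[OF expectation_Ztot_min_le_truncation[OF M(1) q]]] M(3)
    by (simp add: Mr_def T_def)
  also have "\<dots> = real K * G + measure_pmf.expectation (P i) T / Mr"
    using M(3) by (simp add: add_divide_distrib)
  finally have "ennreal (\<bar>eps1 P m s i\<bar> / Qsup P m s)
      \<le> ennreal (real K * G) + ennreal (measure_pmf.expectation (P i) T) / ennreal Mr"
    using q ET M(3) by (simp add: ennreal_plus divide_ennreal ennreal_leI flip: ennreal_plus)
  also have "ennreal (measure_pmf.expectation (P i) T) = (\<integral>\<^sup>+ z. ennreal (T z) \<partial>measure_pmf (P i))"
    using integrable_if_le_Ztot[OF M(1), of T] by (simp add: nn_integral_eq_integral T_def)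
  finally show ?thesis unfolding M(2)[symmetric] T_def .
qed

lemma ennreal_tendsto_zero_if_truncated_bound:
  fixes f \<tau> :: "nat \<Rightarrow> ennreal" and G :: "nat \<Rightarrow> real"
  assumes "G \<longlonglongrightarrow> 0" "\<tau> \<longlonglongrightarrow> 0" "\<And>K n. f n \<le> ennreal (real K * G n) + \<tau> K"
  shows "f \<longlonglongrightarrow> 0"
proof -
  have "limsup f \<le> \<tau> K" for K
  proof -
    have "(\<lambda>n. ennreal (real K * G n) + \<tau> K) \<longlonglongrightarrow> ennreal (real K * 0) + \<tau> K"
      by (intro tendsto_intros tendsto_ennrealI assms(1))
    then have "limsup (\<lambda>n. ennreal (real K * G n) + \<tau> K) = \<tau> K" by (simp add: lim_imp_Limsup)
    moreover have "limsup f \<le> limsup (\<lambda>n. ennreal (real K * G n) + \<tau> K)"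
      using assms(3) by (intro Limsup_mono always_eventually allI)
    ultimately show ?thesis by simp
  qed
  then have "limsup f \<le> 0" using assms(2) by (intro LIMSEQ_le_const) auto
  then show ?thesis
    using tendsto_Limsup[of sequentially f] Liminf_le_Limsup[of sequentially f] by (simp add: le_zero_eq)
qed

lemma SUP_eps1_div_Qsup_le:
  assumes V: "valid_offspring P" and v: "\<And>j. 0 \<le> v j" "summable v"
    and M: "\<And>i j. Mmat P i j \<le> ennreal (C * u i * v j)" and C: "0 < C"
    and u: "\<And>i. 0 < u i \<and> u i \<le> U"
  shows "(\<Squnion>(s, i)\<in>Sset \<times> UNIV. ennreal (\<bar>eps1 P (Suc n) s i\<bar> / Qsup P (Suc n) s))
    \<le> ennreal (real K * (C * U * (\<Sum>j. v j * (1 - genfn P n (\<lambda>_. 0) j))))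
      + (\<Squnion>i. (\<integral>\<^sup>+ z. ennreal (if K < Ztot z then real (Ztot z) else 0) \<partial>measure_pmf (P i)) / Mtot P i)"
    (is "(\<Squnion>(s, i)\<in>_. ?f s i) \<le> ?B + ?\<tau>")
proof (intro SUP_least, clarify)
  fix s i assume "s \<in> Sset"
  then have s: "s \<in> unit_cube" by (simp add: Sset_def unit_cube_def)
  have "?f s i \<le> ?B
      + (\<integral>\<^sup>+ z. ennreal (if K < Ztot z then real (Ztot z) else 0) \<partial>measure_pmf (P i)) / Mtot P i"
    using Qn_Suc_le_weighted_survival[OF V v M C u s] by (rule eps1_div_Qsup_le[OF V s])
  also have "\<dots> \<le> ?B + ?\<tau>" by (intro add_left_mono SUP_upper) simp_all
  finally show "?f s i \<le> ?B + ?\<tau>" .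
qed

theorem lemma6:
  fixes P :: "nat \<Rightarrow> (nat \<Rightarrow> nat) pmf"
  assumes "valid_offspring P"
    and "in_M10 P"
    and "F_not_linear P"
  shows "(\<lambda>n. \<Squnion>(s, i)\<in>Sset \<times> UNIV. ennreal (\<bar>eps1 P n s i\<bar> / Qsup P n s)) \<longlonglongrightarrow> 0"
proof -
  obtain u v C where irr: "\<forall>i j. \<exists>n\<ge>1. 0 < Mpow P n i j" and v: "\<forall>j. 0 < v j"
    and u: "\<forall>i. 0 < u i" "bdd_above (range u)"
    and vM: "\<forall>j. (\<Sum>i. ennreal (v i) * Mmat P i j) = ennreal (v j)" and v1: "(\<Sum>j. ennreal (v j)) = 1"
    and tail: "(\<lambda>K. \<Squnion>i. (\<integral>\<^sup>+ z. ennreal (if K < Ztot z then real (Ztot z) else 0) \<partial>measure_pmf (P i))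
                    / Mtot P i) \<longlonglongrightarrow> 0"
    and C: "0 < C" "\<forall>i j. Mmat P i j < ennreal (C * u i * v j)"
    using assms(2) unfolding in_M10_def by blast
  obtain U where U: "\<And>i. 0 < u i \<and> u i \<le> U" using u by (auto simp: bdd_above_def)
  have v_nonneg: "\<And>j. 0 \<le> v j" and summable: "summable v"
    using v v1 by (auto simp: less_imp_le intro: summable_suminf_not_top)
  have M: "\<And>i j. Mmat P i j \<le> ennreal (C * u i * v j)" using C(2) by (simp add: less_imp_le)
  have "\<And>j. extinction_prob P j = 1"
    using v vM v1 by (intro extinction_prob_eq_one[OF assms(1) irr _ _ _ assms(3)]) auto
  then have "(\<lambda>n. C * U * (\<Sum>j. v j * (1 - genfn P n (\<lambda>_. 0) j))) \<longlonglongrightarrow> 0"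
    using tendsto_mult_left[OF weighted_survival_LIMSEQ_zero[OF summable v_nonneg]] by fastforce
  then have "(\<lambda>n. \<Squnion>(s, i)\<in>Sset \<times> UNIV. ennreal (\<bar>eps1 P (Suc n) s i\<bar> / Qsup P (Suc n) s)) \<longlonglongrightarrow> 0"
    using tail SUP_eps1_div_Qsup_le[OF assms(1) v_nonneg summable M C(1) U]
    by (rule ennreal_tendsto_zero_if_truncated_bound)
  then show ?thesis by (rule LIMSEQ_imp_Suc)
qed

end
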